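(* The set function $h:2^{\{1,\dots,K\}}\to\mathbb R_+$ defined by $$h(\mathcal A)=\sum_{j=1}^N\Big((K-|\mathcal A|+1)\sum_{u\in\mathcal A}p^{\rm su}(u,j)+\sum_{\{u,v\}\subseteq\mathcal A,\,u<v}p^{\rm sic}(\{u,v\},j)\Big)$$ is monotone nondecreasing and submodular, i.e. $h(\mathcal A)\le h(\mathcal B)$ and $h(\mathcal A\cup\{q\})-h(\mathcal A)\ge h(\mathcal B\cup\{q\})-h(\mathcal B)$ for all $\mathcal A\subseteq\mathcal B\subseteq\{1,\dots,K\}$ and $q\notin\mathcal B$.
   Context: Let $K,N,N_r\ge1$. For each user $u\in\{1,\dots,K\}$ and RB $j\in\{1,\dots,N\}$ let $h_{u,j}\in\mathbb C^{N_r}$ and let $\alpha_u\ge0$ be weights. Define $p^{\rm su}(u,j)=\alpha_u\log(1+h_{u,j}^\dagger h_{u,j})$. For a pair $\mathcal U=\{u,v\}$, $u\neq v$, let $\hat u\in\mathcal U$ have $\alpha_{\hat u}=\max\{\alpha_u,\alpha_v\}$ and $\hat v$ the other element, and define $p^{\rm sic}(\mathcal U,j)=p^{\rm su}(\hat u,j)+\alpha_{\hat v}\log\big(1+h_{\hat v,j}^\dagger(I+h_{\hat u,j}h_{\hat u,j}^\dagger)^{-1}h_{\hat v,j}\big)$ (this value does not depend on the choice of $\hat u$ when $\alpha_u=\alpha_v$). *)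

theory Defs
  imports "HOL-Analysis.Analysis"
begin

text \<open>Channel vectors h u j are elements of complex^'r (N_r = CARD('r)).
  Conjugate transpose products are written out explicitly.\<close>

definition hnorm2 :: "complex^'r \<Rightarrow> complex" where
  "hnorm2 x = (\<Sum>i\<in>UNIV. cnj (x $ i) * x $ i)"

definition outer :: "complex^'r \<Rightarrow> complex^'r^'r" where
  "outer x = (\<chi> i k. x $ i * cnj (x $ k))"

definition herm_form :: "complex^'r^'r \<Rightarrow> complex^'r \<Rightarrow> complex" where
  "herm_form M x = (\<Sum>i\<in>UNIV. cnj (x $ i) * (M *v x) $ i)"

definition p_su :: "(nat \<Rightarrow> real) \<Rightarrow> (nat \<Rightarrow> nat \<Rightarrow> complex^'r) \<Rightarrow> nat \<Rightarrow> nat \<Rightarrow> real" where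
  "p_su \<alpha> h u j = \<alpha> u * ln (Re (1 + hnorm2 (h u j)))"

text \<open>SIC value for the pair {u,v}: decode first the user of larger weight
  (ties broken in favour of u; the value is independent of the tie-break).\<close>
definition p_sic :: "(nat \<Rightarrow> real) \<Rightarrow> (nat \<Rightarrow> nat \<Rightarrow> complex^'r) \<Rightarrow> nat \<Rightarrow> nat \<Rightarrow> nat \<Rightarrow> real" where
  "p_sic \<alpha> h u v j =
     (let uh = (if \<alpha> v \<le> \<alpha> u then u else v);
          vh = (if \<alpha> v \<le> \<alpha> u then v else u)
      in p_su \<alpha> h uh j
         + \<alpha> vh * ln (Re (1 + herm_form (matrix_inv (mat 1 + outer (h uh j))) (h vh j))))"

definition hfun :: "nat \<Rightarrow> nat \<Rightarrow> (nat \<Rightarrow> real) \<Rightarrow> (nat \<Rightarrow> nat \<Rightarrow> complex^'r) \<Rightarrow> nat set \<Rightarrow> real" where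
  "hfun K N \<alpha> h A =
     (\<Sum>j\<in>{1..N}. (real K - real (card A) + 1) * (\<Sum>u\<in>A. p_su \<alpha> h u j)
        + (\<Sum>(u,v)\<in>{(u,v). u \<in> A \<and> v \<in> A \<and> u < v}. p_sic \<alpha> h u v j))"

end

theory Submission
  imports Defs
begin

(*
  Write s_j(u) = p_su(u,j) and T_j(u,v) = p_sic({u,v},j).  Then
  h(A) = sum_j G_j(A) with G_j(A) = (K - |A| + 1) * sum_{u in A} s_j(u)
  + sum_{u<v in A} T_j(u,v), so it suffices to treat one resource block.

  1. Linear algebra: by Sherman-Morrison, (I + x x^H)^(-1) = I - x x^H / (1 + |x|^2),
     hence the SIC term equals ln (1 + |y|^2 - |<x,y>|^2 / (1 + |x|^2)).  With
     Cauchy-Schwarz this yields s(u), s(v) <= T(u,v) <= s(u) + s(v) whenever the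
     weights are nonnegative.
  2. Combinatorics: for ANY s >= 0 and T satisfying these three bounds, the marginal
     gain of G is  G(A + q) - G(A) = (K - |A|) s(q) - sum_A s + sum_A T(u,q),
     which is nonnegative (monotonicity) and decreases when A grows by u by exactly
     s(u) + s(q) - T(u,q) >= 0 (submodularity).
  3. The theorem follows by summing over the resource blocks.
*)

definition cinner :: "complex^'r \<Rightarrow> complex^'r \<Rightarrow> complex" where
  "cinner x y = (\<Sum>k\<in>UNIV. cnj (x $ k) * y $ k)"

lemma hnorm2_eq_cinner: "hnorm2 x = cinner x x"
  by (simp add: hnorm2_def cinner_def)

lemma hnorm2_eq_norm: "hnorm2 x = complex_of_real ((norm x)\<^sup>2)"
proof -
  have "(norm x)\<^sup>2 = (\<Sum>i\<in>UNIV. (cmod (x $ i))\<^sup>2)"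
    by (simp add: norm_vec_def L2_set_def sum_nonneg)
  moreover have "cnj (x $ i) * x $ i = complex_of_real ((cmod (x $ i))\<^sup>2)" for i
    by (metis complex_norm_square mult.commute of_real_power)
  ultimately show ?thesis by (simp add: hnorm2_def)
qed

lemma cinner_commute: "cinner y x = cnj (cinner x y)"
  by (simp add: cinner_def mult.commute)

lemma cinner_diff_right: "cinner y (a - b) = cinner y a - cinner y b"
  by (simp add: cinner_def right_diff_distrib sum_subtractf)

lemma cinner_scale_right: "cinner y (c *s a) = c * cinner y a"
  by (simp add: cinner_def sum_distrib_left mult.left_commute)

lemma norm_cinner_le: "cmod (cinner x y) \<le> norm x * norm y"
proof -
  have "cmod (cinner x y) \<le> (\<Sum>k\<in>UNIV. \<bar>cmod (x $ k)\<bar> * \<bar>cmod (y $ k)\<bar>)"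
    unfolding cinner_def by (rule order_trans[OF norm_sum]) (simp add: norm_mult)
  also have "\<dots> \<le> norm x * norm y"
    unfolding norm_vec_def by (rule L2_set_mult_ineq)
  finally show ?thesis .
qed

lemma outer_mult: "outer x *v y = cinner x y *s x"
  by (simp add: vec_eq_iff outer_def cinner_def matrix_vector_mult_def sum_distrib_left mult_ac)

lemma herm_form_eq_cinner: "herm_form M y = cinner y (M *v y)"
  by (simp add: herm_form_def cinner_def)

(* The Sherman-Morrison candidate I - x x^H / (1 + |x|^2) for (I + x x^H)^(-1). *)
definition sm_inverse :: "complex^'r \<Rightarrow> complex^'r^'r" where
  "sm_inverse x = mat 1 - (\<chi> i k. x $ i * cnj (x $ k) / (1 + hnorm2 x))"

lemma sm_inverse_mult: "sm_inverse x *v y = y - (cinner x y / (1 + hnorm2 x)) *s x"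
proof -
  have "(\<chi> i k. x $ i * cnj (x $ k) / (1 + hnorm2 x)) *v y = (cinner x y / (1 + hnorm2 x)) *s x"
    by (simp add: vec_eq_iff cinner_def matrix_vector_mult_def sum_distrib_left
        sum_divide_distrib mult_ac)
  then show ?thesis
    by (simp add: sm_inverse_def matrix_vector_mult_diff_rdistrib)
qed

(* It is a right inverse; checked on vectors using (x x^H) x = |x|^2 x. *)
lemma sm_inverse_right_inverse: "(mat 1 + outer x) ** sm_inverse x = mat 1"
proof -
  let ?d = "1 + hnorm2 x"
  have d: "?d \<noteq> 0"
  proof -
    have "Re ?d \<ge> 1" by (simp add: hnorm2_eq_norm)
    then show ?thesis by (metis not_one_le_zero zero_complex.simps(1))
  qed
  have "(mat 1 + outer x) *v (sm_inverse x *v y) = y" for y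
  proof -
    let ?c = "cinner x y / ?d"
    have "cinner x y - ?c * hnorm2 x = ?c" using d by (simp add: field_simps)
    then have "outer x *v (y - ?c *s x) = ?c *s x"
      by (simp add: outer_mult cinner_diff_right cinner_scale_right hnorm2_eq_cinner)
    then show ?thesis
      by (simp add: sm_inverse_mult matrix_vector_mult_add_rdistrib)
  qed
  then show ?thesis
    by (simp add: matrix_eq matrix_vector_mul_assoc)
qed

lemma matrix_inv_right_inverse:
  fixes A B :: "'a::field^'n^'n"
  assumes "A ** B = mat 1"
  shows "matrix_inv A = B"
proof -
  have "B ** A = mat 1" using assms matrix_left_right_inverse by blast
  then have inv: "A ** matrix_inv A = mat 1 \<and> matrix_inv A ** A = mat 1"
    unfolding matrix_inv_def using assms by (rule someI[where x = B, OF conjI[rotated]])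
  have "matrix_inv A = matrix_inv A ** (A ** B)" by (simp add: assms)
  also have "\<dots> = B" using inv by (simp add: matrix_mul_assoc)
  finally show ?thesis .
qed

lemma quadratic_form_sm:
  "Re (1 + herm_form (matrix_inv (mat 1 + outer x)) y)
     = 1 + (norm y)\<^sup>2 - (cmod (cinner x y))\<^sup>2 / (1 + (norm x)\<^sup>2)"
proof -
  let ?c = "cinner x y"
  have form: "herm_form (matrix_inv (mat 1 + outer x)) y = cinner y y - ?c * cinner y x / (1 + hnorm2 x)"
    by (simp add: matrix_inv_right_inverse[OF sm_inverse_right_inverse] herm_form_eq_cinner
        sm_inverse_mult cinner_diff_right cinner_scale_right)
  have square: "?c * cinner y x = complex_of_real ((cmod ?c)\<^sup>2)"
    unfolding cinner_commute[of y x] by (rule complex_norm_square[symmetric])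
  have "herm_form (matrix_inv (mat 1 + outer x)) y
      = complex_of_real ((norm y)\<^sup>2 - (cmod ?c)\<^sup>2 / (1 + (norm x)\<^sup>2))"
    unfolding form square by (simp add: hnorm2_eq_cinner[symmetric] hnorm2_eq_norm)
  then show ?thesis by simp
qed

lemma p_su_eq: "p_su \<alpha> h u j = \<alpha> u * ln (1 + (norm (h u j))\<^sup>2)"
  by (simp add: p_su_def hnorm2_eq_norm)

(* Scalar core of the SIC bounds: with a = |x|^2, b = |y|^2, c = |<x,y>|^2 <= a b,
   the residual SINR factor r lies in [1, 1+b] and (1+a) r >= 1+b. *)
lemma residual_gain_bounds:
  fixes a b c :: real
  assumes "0 \<le> a" "0 \<le> b" "0 \<le> c" "c \<le> a * b"
  defines "r \<equiv> 1 + b - c / (1 + a)"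
  shows "1 \<le> r" "r \<le> 1 + b" "1 + b \<le> (1 + a) * r"
proof -
  have pos: "0 < 1 + a" using assms by simp
  have "c \<le> b * (1 + a)" using assms by (simp add: algebra_simps)
  then have "c / (1 + a) \<le> b" using pos by (simp add: divide_le_eq)
  then show "1 \<le> r" unfolding r_def by simp
  show "r \<le> 1 + b" unfolding r_def using assms pos by simp
  have "(1 + a) * r = (1 + a) * (1 + b) - c" unfolding r_def using pos by (simp add: field_simps)
  then show "1 + b \<le> (1 + a) * r" using assms by (simp add: algebra_simps)
qed

lemma sic_log_bounds:
  fixes a b c \<alpha>\<^sub>1 \<alpha>\<^sub>2 :: real
  assumes "0 \<le> a" "0 \<le> b" "0 \<le> c" "c \<le> a * b" "0 \<le> \<alpha>\<^sub>2" "\<alpha>\<^sub>2 \<le> \<alpha>\<^sub>1"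
  defines "S \<equiv> \<alpha>\<^sub>1 * ln (1 + a) + \<alpha>\<^sub>2 * ln (1 + b - c / (1 + a))"
  shows "\<alpha>\<^sub>1 * ln (1 + a) \<le> S" "\<alpha>\<^sub>2 * ln (1 + b) \<le> S"
    "S \<le> \<alpha>\<^sub>1 * ln (1 + a) + \<alpha>\<^sub>2 * ln (1 + b)"
proof -
  define r where "r = 1 + b - c / (1 + a)"
  note r = residual_gain_bounds[OF assms(1-4), folded r_def]
  have S: "S = \<alpha>\<^sub>1 * ln (1 + a) + \<alpha>\<^sub>2 * ln r" unfolding S_def r_def ..
  have "0 \<le> ln r" using r(1) by simp
  then show "\<alpha>\<^sub>1 * ln (1 + a) \<le> S" using assms(5) by (simp add: S)
  have "ln r \<le> ln (1 + b)" using r(1,2) by simp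
  then show "S \<le> \<alpha>\<^sub>1 * ln (1 + a) + \<alpha>\<^sub>2 * ln (1 + b)"
    using assms(5) by (simp add: S mult_left_mono)
  have "ln (1 + b) \<le> ln ((1 + a) * r)" using r(3) assms(2) by simp
  also have "\<dots> = ln (1 + a) + ln r" using r(1) assms(1) by (simp add: ln_mult)
  finally have "\<alpha>\<^sub>2 * ln (1 + b) \<le> \<alpha>\<^sub>2 * ln (1 + a) + \<alpha>\<^sub>2 * ln r"
    using assms(5) by (simp add: mult_left_mono distrib_left[symmetric])
  also have "\<alpha>\<^sub>2 * ln (1 + a) \<le> \<alpha>\<^sub>1 * ln (1 + a)"
    using assms(1,6) by (simp add: mult_right_mono)
  finally show "\<alpha>\<^sub>2 * ln (1 + b) \<le> S" by (simp add: S)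
qed

lemma sic_ordered_bounds:
  fixes h :: "nat \<Rightarrow> nat \<Rightarrow> complex^'r" and j :: nat
  assumes "0 \<le> \<alpha> v" "\<alpha> v \<le> \<alpha> u"
  defines "S \<equiv> p_su \<alpha> h u j
     + \<alpha> v * ln (Re (1 + herm_form (matrix_inv (mat 1 + outer (h u j))) (h v j)))"
  shows "p_su \<alpha> h u j \<le> S" "p_su \<alpha> h v j \<le> S" "S \<le> p_su \<alpha> h u j + p_su \<alpha> h v j"
proof -
  let ?x = "h u j" and ?y = "h v j"
  have "(cmod (cinner ?x ?y))\<^sup>2 \<le> ((norm ?x)\<^sup>2) * ((norm ?y)\<^sup>2)"
    using norm_cinner_le[of ?x ?y] by (simp add: power_mult_distrib[symmetric] power_mono)
  note bounds = sic_log_bounds[OF _ _ _ this assms(1,2)]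
  have S: "S = \<alpha> u * ln (1 + (norm ?x)\<^sup>2)
      + \<alpha> v * ln (1 + (norm ?y)\<^sup>2 - (cmod (cinner ?x ?y))\<^sup>2 / (1 + (norm ?x)\<^sup>2))"
    unfolding S_def p_su_eq quadratic_form_sm ..
  show "p_su \<alpha> h u j \<le> S" "p_su \<alpha> h v j \<le> S" "S \<le> p_su \<alpha> h u j + p_su \<alpha> h v j"
    unfolding S p_su_eq using bounds by simp_all
qed

lemma sic_bounds:
  fixes h :: "nat \<Rightarrow> nat \<Rightarrow> complex^'r"
  assumes "0 \<le> \<alpha> u" "0 \<le> \<alpha> v"
  shows "p_su \<alpha> h u j \<le> p_sic \<alpha> h u v j" "p_su \<alpha> h v j \<le> p_sic \<alpha> h u v j"
    "p_sic \<alpha> h u v j \<le> p_su \<alpha> h u j + p_su \<alpha> h v j"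
proof -
  have "p_su \<alpha> h u j \<le> p_sic \<alpha> h u v j \<and> p_su \<alpha> h v j \<le> p_sic \<alpha> h u v j
      \<and> p_sic \<alpha> h u v j \<le> p_su \<alpha> h u j + p_su \<alpha> h v j"
  proof (cases "\<alpha> v \<le> \<alpha> u")
    case True
    then show ?thesis using sic_ordered_bounds[OF assms(2) True, of h j] by (simp add: p_sic_def)
  next
    case False
    then have swapped: "\<alpha> u \<le> \<alpha> v" by simp
    show ?thesis using sic_ordered_bounds[OF assms(1) swapped, of h j] False by (simp add: p_sic_def)
  qed
  then show "p_su \<alpha> h u j \<le> p_sic \<alpha> h u v j" "p_su \<alpha> h v j \<le> p_sic \<alpha> h u v j"
    "p_sic \<alpha> h u v j \<le> p_su \<alpha> h u j + p_su \<alpha> h v j" by auto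
qed

lemma ordered_pairs_insert:
  fixes q :: "'a::linorder" and T :: "'a \<Rightarrow> 'a \<Rightarrow> 'b::comm_monoid_add"
  assumes "finite A" "q \<notin> A"
  shows "(\<Sum>(u,v)\<in>{(u,v). u \<in> insert q A \<and> v \<in> insert q A \<and> u < v}. T u v)
    = (\<Sum>(u,v)\<in>{(u,v). u \<in> A \<and> v \<in> A \<and> u < v}. T u v) + (\<Sum>u\<in>A. T (min u q) (max u q))"
proof -
  let ?P = "{(u,v). u \<in> A \<and> v \<in> A \<and> u < v}" and ?f = "\<lambda>u. (min u q, max u q)"
  have split: "{(u,v). u \<in> insert q A \<and> v \<in> insert q A \<and> u < v} = ?P \<union> ?f ` A"
  proof (intro equalityI subsetI)
    fix p assume "p \<in> {(u,v). u \<in> insert q A \<and> v \<in> insert q A \<and> u < v}"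
    then obtain u v where p: "p = (u, v)" "u \<in> insert q A" "v \<in> insert q A" "u < v" by blast
    then consider "u = q" "v \<in> A" | "v = q" "u \<in> A" | "u \<in> A" "v \<in> A" by auto
    then show "p \<in> ?P \<union> ?f ` A"
    proof cases
      case 1 then have "p = ?f v" using p by simp
      then show ?thesis using 1 by blast
    next
      case 2 then have "p = ?f u" using p by simp
      then show ?thesis using 2 by blast
    qed (use p in blast)
  next
    fix p assume "p \<in> ?P \<union> ?f ` A"
    then show "p \<in> {(u,v). u \<in> insert q A \<and> v \<in> insert q A \<and> u < v}"
      using assms(2) by (auto simp: min_def max_def less_le split: if_splits)
  qed
  have "finite ?P" by (rule finite_subset[of _ "A \<times> A"]) (auto simp: assms(1))
  moreover have "?P \<inter> ?f ` A = {}" using assms(2) by (auto simp: min_def max_def split: if_splits)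
  moreover have "inj_on ?f A" using assms(2) by (auto simp: inj_on_def min_def max_def split: if_splits)
  ultimately show ?thesis
    unfolding split using assms(1) by (simp add: sum.union_disjoint sum.reindex)
qed

lemma mono_from_marginal_gains:
  fixes f :: "'a set \<Rightarrow> 'b::preorder"
  assumes gain: "\<And>A q. A \<subseteq> U \<Longrightarrow> q \<in> U \<Longrightarrow> q \<notin> A \<Longrightarrow> f A \<le> f (insert q A)"
    and "finite U" "A \<subseteq> B" "B \<subseteq> U"
  shows "f A \<le> f B"
proof -
  have "f A \<le> f (A \<union> D)" if "finite D" "D \<subseteq> B - A" for D
    using that
  proof (induction D rule: finite_subset_induct')
    case empty then show ?case by simp
  next
    case (insert q D)
    then have "f (A \<union> D) \<le> f (insert q (A \<union> D))"
      using gain[of "A \<union> D" q] assms(3,4) by blast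
    then show ?case using insert.IH by (simp add: order_trans)
  qed
  moreover have "finite (B - A)" using assms(2,4) finite_subset by blast
  moreover have "A \<union> (B - A) = B" using assms(3) by blast
  ultimately show ?thesis by (metis order_refl)
qed

definition pair_utility :: "nat \<Rightarrow> (nat \<Rightarrow> real) \<Rightarrow> (nat \<Rightarrow> nat \<Rightarrow> real) \<Rightarrow> nat set \<Rightarrow> real" where
  "pair_utility K s T A = (real K - real (card A) + 1) * sum s A
     + (\<Sum>(u,v)\<in>{(u,v). u \<in> A \<and> v \<in> A \<and> u < v}. T u v)"

lemma pair_utility_gain:
  assumes "finite A" "q \<notin> A"
  shows "pair_utility K s T (insert q A) - pair_utility K s T A
     = (real K - real (card A)) * s q - sum s A + (\<Sum>u\<in>A. T (min u q) (max u q))"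
  unfolding pair_utility_def ordered_pairs_insert[OF assms] using assms
  by (simp add: algebra_simps)

context
  fixes K :: nat and s :: "nat \<Rightarrow> real" and T :: "nat \<Rightarrow> nat \<Rightarrow> real"
  assumes s_nonneg: "\<And>u. u \<in> {1..K} \<Longrightarrow> 0 \<le> s u"
    and T_ge_left: "\<And>u v. u \<in> {1..K} \<Longrightarrow> v \<in> {1..K} \<Longrightarrow> s u \<le> T u v"
    and T_ge_right: "\<And>u v. u \<in> {1..K} \<Longrightarrow> v \<in> {1..K} \<Longrightarrow> s v \<le> T u v"
    and T_le_sum: "\<And>u v. u \<in> {1..K} \<Longrightarrow> v \<in> {1..K} \<Longrightarrow> T u v \<le> s u + s v"
begin

(* Each gain is nonnegative since |A| <= K and s u <= T(u,q). *)
lemma pair_utility_gain_nonneg: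
  assumes "A \<subseteq> {1..K}" "q \<in> {1..K}" "q \<notin> A"
  shows "pair_utility K s T A \<le> pair_utility K s T (insert q A)"
proof -
  have fin: "finite A" using assms(1) finite_subset by blast
  have "card A \<le> card {1..K}" using assms(1) by (intro card_mono) auto
  then have "0 \<le> (real K - real (card A)) * s q" using s_nonneg[OF assms(2)] by simp
  moreover have "sum s A \<le> (\<Sum>u\<in>A. T (min u q) (max u q))"
  proof (rule sum_mono)
    fix u assume "u \<in> A"
    then have "u \<in> {1..K}" using assms(1) by blast
    then show "s u \<le> T (min u q) (max u q)"
      using T_ge_left[OF _ assms(2)] T_ge_right[OF assms(2)] by (simp add: min_def max_def)
  qed
  ultimately show ?thesis using pair_utility_gain[OF fin assms(3), of K s T] by simp
qed

lemma pair_utility_mono: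
  assumes "A \<subseteq> B" "B \<subseteq> {1..K}"
  shows "pair_utility K s T A \<le> pair_utility K s T B"
  using mono_from_marginal_gains[OF pair_utility_gain_nonneg _ assms] by simp

(* Submodularity: the gains differ by a sum of s u + s q - T(u,q) >= 0 over B - A. *)
lemma pair_utility_submodular:
  assumes "A \<subseteq> B" "B \<subseteq> {1..K}" "q \<in> {1..K}" "q \<notin> B"
  shows "pair_utility K s T (insert q B) - pair_utility K s T B
    \<le> pair_utility K s T (insert q A) - pair_utility K s T A"
proof -
  let ?P = "\<lambda>u. T (min u q) (max u q)"
  have finB: "finite B" using assms(2) finite_subset by blast
  have finA: "finite A" using assms(1) finB finite_subset by blast
  have split: "sum f B = sum f A + sum f (B - A)" for f :: "nat \<Rightarrow> real"
    using sum.subset_diff[OF assms(1) finB, of f] by (simp add: add.commute)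
  have card: "real (card B) = real (card A) + real (card (B - A))"
    using card_Diff_subset[OF finA assms(1)] card_mono[OF finB assms(1)] by simp
  have "0 \<le> (\<Sum>u\<in>B - A. s u + s q - ?P u)"
  proof (rule sum_nonneg)
    fix u assume "u \<in> B - A"
    then have u: "u \<in> {1..K}" using assms(2) by blast
    show "0 \<le> s u + s q - ?P u"
      using T_le_sum[OF u assms(3)] T_le_sum[OF assms(3) u] by (simp add: min_def max_def)
  qed
  moreover have "q \<notin> A" using assms(1,4) by blast
  ultimately show ?thesis
    unfolding pair_utility_gain[OF finA \<open>q \<notin> A\<close>] pair_utility_gain[OF finB assms(4)]
    by (simp add: split[of s] split[of ?P] card sum.distrib sum_subtractf algebra_simps)
qed

end

lemma p_su_nonneg: "0 \<le> \<alpha> u \<Longrightarrow> 0 \<le> p_su \<alpha> h u j"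
  by (simp add: p_su_eq)

lemma hfun_eq_sum_pair_utility:
  "hfun K N \<alpha> h A = (\<Sum>j\<in>{1..N}. pair_utility K (\<lambda>u. p_su \<alpha> h u j) (\<lambda>u v. p_sic \<alpha> h u v j) A)"
  by (simp add: hfun_def pair_utility_def)

context
  fixes K :: nat and \<alpha> :: "nat \<Rightarrow> real" and h :: "nat \<Rightarrow> nat \<Rightarrow> complex^'r" and j :: nat
  assumes \<alpha>_nonneg: "\<And>u. u \<in> {1..K} \<Longrightarrow> 0 \<le> \<alpha> u"
begin

lemma rb_utility_mono:
  assumes "A \<subseteq> B" "B \<subseteq> {1..K}"
  shows "pair_utility K (\<lambda>u. p_su \<alpha> h u j) (\<lambda>u v. p_sic \<alpha> h u v j) A
    \<le> pair_utility K (\<lambda>u. p_su \<alpha> h u j) (\<lambda>u v. p_sic \<alpha> h u v j) B"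
  by (rule pair_utility_mono[OF p_su_nonneg sic_bounds assms])
    (use \<alpha>_nonneg in blast)+

lemma rb_utility_submodular:
  assumes "A \<subseteq> B" "B \<subseteq> {1..K}" "q \<in> {1..K}" "q \<notin> B"
  shows "pair_utility K (\<lambda>u. p_su \<alpha> h u j) (\<lambda>u v. p_sic \<alpha> h u v j) (insert q B)
      - pair_utility K (\<lambda>u. p_su \<alpha> h u j) (\<lambda>u v. p_sic \<alpha> h u v j) B
    \<le> pair_utility K (\<lambda>u. p_su \<alpha> h u j) (\<lambda>u v. p_sic \<alpha> h u v j) (insert q A)
      - pair_utility K (\<lambda>u. p_su \<alpha> h u j) (\<lambda>u v. p_sic \<alpha> h u v j) A"
  by (rule pair_utility_submodular[OF p_su_nonneg sic_bounds assms])
    (use \<alpha>_nonneg in blast)+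

end

theorem theorem3:
  fixes K N :: nat and \<alpha> :: "nat \<Rightarrow> real" and h :: "nat \<Rightarrow> nat \<Rightarrow> complex^'r"
  assumes "K \<ge> 1" and "N \<ge> 1" and "\<And>u. u \<in> {1..K} \<Longrightarrow> \<alpha> u \<ge> 0"
  shows "\<forall>A B q. A \<subseteq> B \<and> B \<subseteq> {1..K} \<longrightarrow>
           hfun K N \<alpha> h A \<le> hfun K N \<alpha> h B \<and>
           (q \<in> {1..K} \<and> q \<notin> B \<longrightarrow>
              hfun K N \<alpha> h (insert q A) - hfun K N \<alpha> h A
                \<ge> hfun K N \<alpha> h (insert q B) - hfun K N \<alpha> h B)"
proof (intro allI impI conjI)
  fix A B q
  assume AB: "A \<subseteq> B \<and> B \<subseteq> {1..K}"
  show "hfun K N \<alpha> h A \<le> hfun K N \<alpha> h B"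
    unfolding hfun_eq_sum_pair_utility
    using rb_utility_mono[of K \<alpha>, OF assms(3)] AB by (intro sum_mono) blast
  assume "q \<in> {1..K} \<and> q \<notin> B"
  then show "hfun K N \<alpha> h (insert q B) - hfun K N \<alpha> h B
      \<le> hfun K N \<alpha> h (insert q A) - hfun K N \<alpha> h A"
    unfolding hfun_eq_sum_pair_utility sum_subtractf[symmetric]
    using rb_utility_submodular[of K \<alpha>, OF assms(3)] AB by (intro sum_mono) blast
qed

end
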